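(* Let $p>1$ and $\lambda>0$ be fixed, and define $\phi:(0,+\infty)\times[0,\pi/2)\to\mathbb{R}$ by $$\phi(R,\theta)=2\int_0^1\frac{ds}{\sqrt{\frac{1}{\cos^2\theta}-s^2+\frac{2R^{p-1}\cos^{p-1}\theta}{\lambda(p+1)}\,(1-s^{p+1})}}.$$ Then $\phi$ is continuous, takes values in $(0,+\infty)$, is of class $\mathcal{C}^1$ in $(0,+\infty)\times(0,\pi/2)$, and satisfies: (i) for each $\theta\in[0,\pi/2)$, $R\mapsto\phi(R,\theta)$ is decreasing, $\lim_{R\uparrow+\infty}\phi(R,\theta)=0$, and $\phi(R,\theta)<\lim_{R\downarrow0}\phi(R,\theta)=\pi-2\theta$ for all $R>0$; (ii) $\phi$ can be extended by continuity to $\theta=\pi/2$ by setting $\phi(\cdot,\pi/2)=0$; (iii) (with this extension) $\phi$ has a continuous derivative with respect to $\theta\in(0,\pi/2]$, and $\frac{\partial\phi}{\partial\theta}(R,\pi/2)=-2$ for every $R>0$. *)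

theory Defs
  imports "HOL-Analysis.Analysis"
begin

definition phi :: "real \<Rightarrow> real \<Rightarrow> real \<Rightarrow> real \<Rightarrow> real" where
  "phi p lam R \<theta> = 2 * integral {0..1} (\<lambda>s. 1 / sqrt (1 / (cos \<theta>)^2 - s^2
      + (2 * R powr (p - 1) * (cos \<theta>) powr (p - 1)) / (lam * (p + 1)) * (1 - s powr (p + 1))))"

definition phi_ext :: "real \<Rightarrow> real \<Rightarrow> real \<Rightarrow> real \<Rightarrow> real" where
  "phi_ext p lam R \<theta> = (if \<theta> = pi / 2 then 0 else phi p lam R \<theta>)"

end

theory Submission
  imports Defs
begin

text \<open>With c = cos \<theta> and a = 2 R^(p-1) / (\<lambda> (p+1)), pulling the factor 1/c^2 out of the
  square root gives \<phi>(R,\<theta>) = 2 c J(a,c), where J(a,c) is the integral over [0,1] of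
  1 / sqrt (1 - c^2 s^2 + a c^(p+1) (1 - s^(p+1))). The radicand is at least
  (1 - s)(1 + a c^(p+1)), so the integrand is dominated by 1 / sqrt (1 - s): this makes J
  continuous up to c = 1 and gives J(a,c) \<le> 2 / sqrt (1 + a c^(p+1)), whence \<phi> tends to 0 as
  R tends to infinity. For c < 1 the radicand is at least 1 - c^2, so J can be differentiated under
  the integral sign. J is strictly decreasing in a and J(0,c) = arcsin c / c, which gives the
  monotonicity in R and the limit 2 arcsin (cos \<theta>) = \<pi> - 2\<theta> as R tends to 0. Finally, the factor
  2 cos \<theta> vanishes at \<theta> = \<pi>/2, so there the \<theta>-derivative is -2 sin (\<pi>/2) J(a,0) = -2.\<close>

lemma integrable_on_dominated_continuous:
  fixes f h :: "'n::euclidean_space \<Rightarrow> real"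
  assumes N: "negligible N" and S: "S \<in> sets lebesgue"
    and cont: "continuous_on (S - N) f" and h: "h integrable_on S"
    and bound: "\<And>s. s \<in> S - N \<Longrightarrow> \<bar>f s\<bar> \<le> h s"
  shows "f integrable_on S"
proof -
  have spike: "negligible {s \<in> S - (S - N). P s}" "negligible {s \<in> (S - N) - S. P s}" for P
    by (auto intro!: negligible_subset[OF N])
  have SN: "S - N \<in> sets lebesgue"
    using N S by (simp add: negligible_imp_sets sets.Diff)
  have "f integrable_on S - N"
    using continuous_imp_measurable_on_sets_lebesgue[OF cont SN] integrable_spike_set[OF h spike]
      bound SN
    by (rule measurable_bounded_by_integrable_imp_integrable_real)
  then show ?thesis
    using integrable_spike_set[OF _ spike(2) spike(1)] by blast
qed

lemma continuous_on_integral_dominated: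
  fixes f :: "'a::metric_space \<Rightarrow> 'n::euclidean_space \<Rightarrow> 'm::euclidean_space"
    and h :: "'n \<Rightarrow> real"
  assumes N: "negligible N"
    and f: "\<And>x. x \<in> X \<Longrightarrow> f x integrable_on S" and h: "h integrable_on S"
    and bound: "\<And>x s. x \<in> X \<Longrightarrow> s \<in> S - N \<Longrightarrow> norm (f x s) \<le> h s"
    and cont: "\<And>s. s \<in> S - N \<Longrightarrow> continuous_on X (\<lambda>x. f x s)"
  shows "continuous_on X (\<lambda>x. integral S (f x))"
proof (rule continuous_on_sequentiallyI)
  fix u x assume u: "\<forall>n. u n \<in> X" and x: "x \<in> X" and lim: "u \<longlonglongrightarrow> x"
  have spike: "negligible {s \<in> S - (S - N). P s}" "negligible {s \<in> (S - N) - S. P s}" for P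
    by (auto intro!: negligible_subset[OF N])
  have "(\<lambda>n. integral (S - N) (f (u n))) \<longlonglongrightarrow> integral (S - N) (f x)"
  proof (rule dominated_convergence(2))
    show "f (u n) integrable_on S - N" for n
      using integrable_spike_set[OF f spike] u by blast
    show "h integrable_on S - N"
      using integrable_spike_set[OF h spike] .
    show "norm (f (u n) s) \<le> h s" if "s \<in> S - N" for n s
      using bound u that by blast
    show "(\<lambda>n. f (u n) s) \<longlonglongrightarrow> f x s" if "s \<in> S - N" for s
      using continuous_on_tendsto_compose[OF cont[OF that] lim x always_eventually[OF u]] .
  qed
  moreover have "integral S g = integral (S - N) g" for g :: "'n \<Rightarrow> 'm"
    using integral_spike_set[OF spike] .
  ultimately show "(\<lambda>n. integral S (f (u n))) \<longlonglongrightarrow> integral S (f x)"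
    by simp
qed

lemma integral_pos_if_pos_on_subinterval:
  fixes g :: "real \<Rightarrow> real"
  assumes g: "g integrable_on {a..b}" and nonneg: "\<And>s. s \<in> {a..b} \<Longrightarrow> 0 \<le> g s"
    and sub: "{c..d} \<subseteq> {a..b}" and "c < d"
    and cont: "continuous_on {c..d} g" and pos: "\<And>s. s \<in> {c..d} \<Longrightarrow> 0 < g s"
  shows "0 < integral {a..b} g"
proof -
  obtain s0 where s0: "s0 \<in> {c..d}" "\<And>s. s \<in> {c..d} \<Longrightarrow> g s0 \<le> g s"
    using continuous_attains_inf[OF compact_Icc _ cont] \<open>c < d\<close> by auto
  have g_cd: "g integrable_on {c..d}"
    using integrable_on_subinterval[OF g] sub by blast
  have "0 < g s0 * (d - c)"
    using pos[OF s0(1)] \<open>c < d\<close> by simp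
  also have "\<dots> = integral {c..d} (\<lambda>_. g s0)"
    using \<open>c < d\<close> by simp
  also have "\<dots> \<le> integral {c..d} g"
    using s0 g_cd by (intro integral_le) auto
  also have "\<dots> \<le> integral {a..b} g"
    using sub g_cd g nonneg by (intro integral_subset_le) auto
  finally show ?thesis .
qed

lemma DERIV_mult_vanishing:
  fixes u v :: "real \<Rightarrow> real"
  assumes u: "(u has_real_derivative u') (at x within S)" and "u x = 0"
    and v: "continuous (at x within S) v"
  shows "((\<lambda>t. u t * v t) has_real_derivative u' * v x) (at x within S)"
proof -
  obtain g where g: "\<And>z. u z - u x = g z * (z - x)" "continuous (at x within S) g" "g x = u'"
    using u unfolding DERIV_caratheodory_within by blast
  show ?thesis
    unfolding DERIV_caratheodory_within
  proof (intro exI conjI allI)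
    show "u z * v z - u x * v x = (g z * v z) * (z - x)" for z
      using g(1)[of z] \<open>u x = 0\<close> by simp
    show "continuous (at x within S) (\<lambda>z. g z * v z)"
      using g(2) v by (intro continuous_mult)
  qed (use g(3) in simp)
qed

lemma has_derivative_real_partialsI:
  fixes f :: "real \<Rightarrow> real \<Rightarrow> real"
  assumes X: "open X" "x \<in> X" and Y: "open Y" "convex Y" "y \<in> Y"
    and fx: "\<And>x y. x \<in> X \<Longrightarrow> y \<in> Y \<Longrightarrow> ((\<lambda>x. f x y) has_real_derivative fx x y) (at x)"
    and fy: "\<And>x y. x \<in> X \<Longrightarrow> y \<in> Y \<Longrightarrow> ((\<lambda>y. f x y) has_real_derivative fy x y) (at y)"
    and fy_cont: "continuous_on (X \<times> Y) (\<lambda>z. fy (fst z) (snd z))"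
  shows "((\<lambda>z. f (fst z) (snd z)) has_derivative (\<lambda>h. fx x y * fst h + fy x y * snd h)) (at (x, y))"
proof -
  have "continuous_on (X \<times> Y) (\<lambda>z. blinfun_mult_right (fy (fst z) (snd z)))"
    using fy_cont by (intro continuous_intros)
  then have "continuous (at (x, y) within X \<times> Y) (\<lambda>(x, y). blinfun_mult_right (fy x y))"
    using X Y by (simp add: continuous_on_eq_continuous_within case_prod_beta')
  then have "((\<lambda>(x, y). f x y) has_derivative (\<lambda>(tx, ty). fx x y * tx + fy x y * ty)) (at (x, y) within X \<times> Y)"
    using fx[OF X(2) Y(3)] fy Y
    by (intro has_derivative_partialsI[where fy = "\<lambda>x y. blinfun_mult_right (fy x y)", simplified])
      (auto simp: has_field_derivative_def intro: has_derivative_at_withinI)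
  moreover have "at (x, y) within X \<times> Y = at (x, y)"
    using X Y by (intro at_within_open) (auto intro: open_Times)
  ultimately show ?thesis
    by (simp add: case_prod_beta')
qed

lemma has_integral_inverse_sqrt_one_minus: "((\<lambda>s. 1 / sqrt (1 - s)) has_integral 2) {0..1::real}"
proof -
  have "((\<lambda>s. 1 / sqrt (1 - s)) has_integral (- 2 * sqrt (1 - 1) - (- 2 * sqrt (1 - 0)))) {0..1::real}"
  proof (rule fundamental_theorem_of_calculus_interior)
    show "continuous_on {0..1::real} (\<lambda>s. - 2 * sqrt (1 - s))"
      by (intro continuous_intros)
    show "((\<lambda>s. - 2 * sqrt (1 - s)) has_vector_derivative 1 / sqrt (1 - s)) (at s)"
      if "s \<in> {0<..<1}" for s
      unfolding has_real_derivative_iff_has_vector_derivative[symmetric]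
      using that by (auto intro!: derivative_eq_intros simp: field_simps)
  qed simp
  then show ?thesis by simp
qed

lemma integrable_inverse_sqrt_one_minus: "(\<lambda>s. 1 / sqrt (1 - s)) integrable_on {0..1::real}"
  using has_integral_inverse_sqrt_one_minus by blast

lemma filterlim_powr_at_top:
  fixes e :: real
  assumes "0 < e"
  shows "filterlim (\<lambda>x. x powr e) at_top at_top"
proof (rule filterlim_mono_eventually[OF _ order_refl order_refl])
  show "filterlim (\<lambda>x. exp (e * ln x)) at_top at_top"
    using assms by (intro filterlim_compose[OF exp_at_top]
        filterlim_tendsto_pos_mult_at_top[OF tendsto_const] ln_at_top)
  show "\<forall>\<^sub>F x in at_top. exp (e * ln x) = x powr e"
    using eventually_gt_at_top[of 0] by eventually_elim (simp add: powr_def)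
qed

lemma powr_le_base:
  fixes s e :: real
  assumes "0 \<le> s" "s \<le> 1" "1 \<le> e"
  shows "s powr e \<le> s"
  using assms powr_le_one_le[of s e] by (cases "s = 0") auto

lemma has_real_derivative_inverse_sqrt:
  assumes "(u has_real_derivative u') (at x within S)" and "0 < u x"
  shows "((\<lambda>x. 1 / sqrt (u x)) has_real_derivative - u' / (2 * (u x * sqrt (u x)))) (at x within S)"
  using assms by (auto intro!: derivative_eq_intros simp: field_simps power2_eq_square)

lemma cos_gt_zero_0_pi_half:
  assumes "\<theta> \<in> {0..<pi/2}"
  shows "0 < cos \<theta>"
  using assms by (intro cos_gt_zero_pi) auto

lemma cos_ge_zero_less_one_0_pi_half:
  assumes "\<theta> \<in> {0<..pi/2}"
  shows "0 \<le> cos \<theta>" and "cos \<theta> < 1"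
proof -
  show "0 \<le> cos \<theta>"
    using assms by (intro cos_ge_zero) auto
  have "cos \<theta> < cos 0"
    using assms pi_gt_zero by (intro cos_monotone_0_pi) auto
  then show "cos \<theta> < 1"
    by simp
qed

section \<open>The integral J\<close>

definition radicand :: "real \<Rightarrow> real \<Rightarrow> real \<Rightarrow> real \<Rightarrow> real" where
  "radicand p a c s = 1 - c\<^sup>2 * s\<^sup>2 + a * c powr (p + 1) * (1 - s powr (p + 1))"

definition J :: "real \<Rightarrow> real \<Rightarrow> real \<Rightarrow> real" where
  "J p a c = integral {0..1} (\<lambda>s. 1 / sqrt (radicand p a c s))"

lemma radicand_ge_one_minus_s:
  assumes "0 \<le> p" "0 \<le> a" "0 \<le> c" "c \<le> 1" "0 \<le> s" "s \<le> 1"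
  shows "(1 - s) * (1 + a * c powr (p + 1)) \<le> radicand p a c s"
proof -
  have "c\<^sup>2 * s\<^sup>2 \<le> 1 * s"
    using assms by (intro mult_mono) (auto simp: power_le_one power2_eq_square mult_le_one mult_left_le_one_le)
  moreover have "a * c powr (p + 1) * (1 - s) \<le> a * c powr (p + 1) * (1 - s powr (p + 1))"
    using assms powr_le_base[of s "p + 1"] by (intro mult_left_mono) auto
  ultimately show ?thesis
    unfolding radicand_def by (simp add: algebra_simps)
qed

lemma radicand_ge_one_minus_c:
  assumes "0 \<le> p" "0 \<le> a" "0 \<le> c" "0 \<le> s" "s \<le> 1"
  shows "1 - c\<^sup>2 \<le> radicand p a c s"
proof -
  have "c\<^sup>2 * s\<^sup>2 \<le> c\<^sup>2 * 1"
    using assms by (intro mult_left_mono) (auto simp: power_le_one)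
  moreover have "0 \<le> a * c powr (p + 1) * (1 - s powr (p + 1))"
    using assms powr_le_base[of s "p + 1"] by simp
  ultimately show ?thesis
    unfolding radicand_def by simp
qed

lemma radicand_pos:
  assumes "0 \<le> p" "0 \<le> a" "0 \<le> c" "c \<le> 1" "0 \<le> s" "s \<le> 1" and "s < 1 \<or> c < 1"
  shows "0 < radicand p a c s"
proof (cases "s < 1")
  case True
  have "0 < (1 - s) * (1 + a * c powr (p + 1))"
    using True assms by (simp add: add_pos_nonneg)
  then show ?thesis
    using radicand_ge_one_minus_s[OF assms(1-6)] by linarith
next
  case False
  then have "c\<^sup>2 < 1"
    using assms by (simp add: power_less_one_iff)
  then show ?thesis
    using radicand_ge_one_minus_c[of p a c s] assms by linarith
qed

lemma radicand_mono_a: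
  assumes "0 \<le> p" "a1 \<le> a2" "0 \<le> c" "0 \<le> s" "s \<le> 1"
  shows "radicand p a1 c s \<le> radicand p a2 c s"
  using assms powr_le_base[of s "p + 1"] unfolding radicand_def
  by (intro add_left_mono mult_right_mono) auto

lemma radicand_strict_mono_a:
  assumes "0 \<le> p" "a1 < a2" "0 < c" "0 \<le> s" "s < 1"
  shows "radicand p a1 c s < radicand p a2 c s"
proof -
  have "s powr (p + 1) < 1"
    using assms powr_le_base[of s "p + 1"] by linarith
  then show ?thesis
    using assms unfolding radicand_def by (intro add_strict_left_mono mult_strict_right_mono) auto
qed

lemma continuous_on_radicand [continuous_intros]:
  assumes "0 \<le> p" "continuous_on S fa" "continuous_on S fc" "continuous_on S fs"
    and "\<And>x. x \<in> S \<Longrightarrow> 0 \<le> fc x \<and> 0 \<le> fs x"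
  shows "continuous_on S (\<lambda>x. radicand p (fa x) (fc x) (fs x))"
  unfolding radicand_def using assms
  by (intro continuous_intros continuous_on_powr') auto

lemma continuous_on_inverse_sqrt_radicand [continuous_intros]:
  assumes "0 \<le> p" "continuous_on S fa" "continuous_on S fc" "continuous_on S fs"
    and "\<And>x. x \<in> S \<Longrightarrow> 0 \<le> fa x \<and> 0 \<le> fc x \<and> fc x \<le> 1 \<and> 0 \<le> fs x \<and> fs x \<le> 1 \<and> (fs x < 1 \<or> fc x < 1)"
  shows "continuous_on S (\<lambda>x. 1 / sqrt (radicand p (fa x) (fc x) (fs x)))"
proof -
  have "radicand p (fa x) (fc x) (fs x) \<noteq> 0" if "x \<in> S" for x
    using radicand_pos[of p "fa x" "fc x" "fs x"] assms that by force
  then show ?thesis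
    using assms by (intro continuous_intros) auto
qed

lemma radicand_nonneg:
  assumes "0 \<le> p" "0 \<le> a" "0 \<le> c" "c \<le> 1" "0 \<le> s" "s \<le> 1"
  shows "0 \<le> radicand p a c s"
  by (rule order_trans[OF _ radicand_ge_one_minus_s[OF assms]]) (use assms in simp)

lemma inverse_sqrt_radicand_le:
  assumes "0 \<le> p" "0 \<le> a" "0 \<le> c" "c \<le> 1" "0 \<le> s" "s < 1"
  shows "1 / sqrt (radicand p a c s) \<le> 1 / sqrt (1 - s) / sqrt (1 + a * c powr (p + 1))"
proof -
  have "0 < (1 - s) * (1 + a * c powr (p + 1))"
    using assms by (simp add: add_pos_nonneg)
  then have "1 / sqrt (radicand p a c s) \<le> 1 / sqrt ((1 - s) * (1 + a * c powr (p + 1)))"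
    using radicand_ge_one_minus_s[of p a c s] assms by (intro divide_left_mono) auto
  then show ?thesis
    by (simp add: real_sqrt_mult)
qed

lemma inverse_sqrt_radicand_le_inverse_sqrt:
  assumes "0 \<le> p" "0 \<le> a" "0 \<le> c" "c \<le> 1" "0 \<le> s" "s < 1"
  shows "1 / sqrt (radicand p a c s) \<le> 1 / sqrt (1 - s)"
proof -
  have "1 - s \<le> (1 - s) * (1 + a * c powr (p + 1))"
    using assms by simp
  then have "1 - s \<le> radicand p a c s"
    using radicand_ge_one_minus_s[of p a c s] assms by linarith
  moreover have "0 < 1 - s"
    using assms by simp
  ultimately show ?thesis
    by (intro divide_left_mono) auto
qed

lemma integrable_inverse_sqrt_radicand:
  assumes "0 \<le> p" "0 \<le> a" "0 \<le> c" "c \<le> 1"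
  shows "(\<lambda>s. 1 / sqrt (radicand p a c s)) integrable_on {0..1}"
proof (rule integrable_on_dominated_continuous[where N = "{1}"])
  show "continuous_on ({0..1} - {1}) (\<lambda>s. 1 / sqrt (radicand p a c s))"
    using assms by (intro continuous_intros) auto
  show "\<bar>1 / sqrt (radicand p a c s)\<bar> \<le> 1 / sqrt (1 - s)" if "s \<in> {0..1} - {1}" for s
    using that assms inverse_sqrt_radicand_le_inverse_sqrt[of p a c s] radicand_pos[of p a c s]
    by auto
qed (auto simp: integrable_inverse_sqrt_one_minus)

lemma continuous_on_J [continuous_intros]:
  fixes f g :: "'a::metric_space \<Rightarrow> real"
  assumes "0 \<le> p" "continuous_on S f" "continuous_on S g"
    and "\<And>x. x \<in> S \<Longrightarrow> 0 \<le> f x \<and> 0 \<le> g x \<and> g x \<le> 1"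
  shows "continuous_on S (\<lambda>x. J p (f x) (g x))"
  unfolding J_def
proof (rule continuous_on_integral_dominated[where N = "{1}" and h = "\<lambda>s. 1 / sqrt (1 - s)"])
  show "(\<lambda>s. 1 / sqrt (radicand p (f x) (g x) s)) integrable_on {0..1}" if "x \<in> S" for x
    using assms that by (intro integrable_inverse_sqrt_radicand) auto
  show "norm (1 / sqrt (radicand p (f x) (g x) s)) \<le> 1 / sqrt (1 - s)"
    if "x \<in> S" "s \<in> {0..1} - {1}" for x s
    using assms that inverse_sqrt_radicand_le_inverse_sqrt[of p "f x" "g x" s]
      radicand_pos[of p "f x" "g x" s] by auto
  show "continuous_on S (\<lambda>x. 1 / sqrt (radicand p (f x) (g x) s))" if "s \<in> {0..1} - {1}" for s
    using assms that by (intro continuous_intros) auto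
qed (auto simp: integrable_inverse_sqrt_one_minus)

lemma J_pos:
  assumes "0 \<le> p" "0 \<le> a" "0 \<le> c" "c \<le> 1"
  shows "0 < J p a c"
  unfolding J_def
proof (rule integral_pos_if_pos_on_subinterval[of _ 0 1 0 "1/2"])
  show "continuous_on {0..1/2} (\<lambda>s. 1 / sqrt (radicand p a c s))"
    using assms by (intro continuous_intros) auto
  show "0 < 1 / sqrt (radicand p a c s)" if "s \<in> {0..1/2}" for s
    using assms that radicand_pos[of p a c s] by simp
qed (use assms integrable_inverse_sqrt_radicand radicand_nonneg in auto)

lemma J_strict_antimono:
  assumes "0 \<le> p" "0 \<le> a1" "a1 < a2" "0 < c" "c \<le> 1"
  shows "J p a2 c < J p a1 c"
proof -
  let ?f = "\<lambda>a s. 1 / sqrt (radicand p a c s)"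
  have int: "?f a integrable_on {0..1}" if "0 \<le> a" for a
    using assms that by (intro integrable_inverse_sqrt_radicand) auto
  have "0 < integral {0..1} (\<lambda>s. ?f a1 s - ?f a2 s)"
  proof (rule integral_pos_if_pos_on_subinterval[of _ 0 1 0 "1/2"])
    show "(\<lambda>s. ?f a1 s - ?f a2 s) integrable_on {0..1}"
      using int assms by (intro integrable_diff) auto
    show "0 \<le> ?f a1 s - ?f a2 s" if "s \<in> {0..1}" for s
    proof (cases "s = 1")
      case False
      then have "0 < radicand p a1 c s"
        using assms that by (intro radicand_pos) auto
      then have "1 / sqrt (radicand p a2 c s) \<le> 1 / sqrt (radicand p a1 c s)"
        using assms that radicand_mono_a[of p a1 a2 c s]
        by (intro divide_left_mono real_sqrt_le_mono) auto
      then show ?thesis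
        by simp
    qed (simp add: radicand_def)
    show "continuous_on {0..1/2} (\<lambda>s. ?f a1 s - ?f a2 s)"
      using assms by (intro continuous_intros) auto
    show "0 < ?f a1 s - ?f a2 s" if "s \<in> {0..1/2}" for s
    proof -
      have "0 < radicand p a1 c s"
        using assms that by (intro radicand_pos) auto
      then have "1 / sqrt (radicand p a2 c s) < 1 / sqrt (radicand p a1 c s)"
        using assms that radicand_strict_mono_a[of p a1 a2 c s]
        by (intro divide_strict_left_mono real_sqrt_less_mono) auto
      then show ?thesis
        by simp
    qed
  qed auto
  then show ?thesis
    using int assms unfolding J_def by (simp add: integral_diff)
qed

lemma J_le:
  assumes "0 \<le> p" "0 \<le> a" "0 \<le> c" "c \<le> 1"
  shows "J p a c \<le> 2 / sqrt (1 + a * c powr (p + 1))"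
proof -
  let ?K = "sqrt (1 + a * c powr (p + 1))"
  \<comment> \<open>At s = 1 the dominating function takes the junk value 1 / sqrt 0 = 0, so the integrand is
    first changed there.\<close>
  have "J p a c = integral {0..1} (\<lambda>s. if s = 1 then 0 else 1 / sqrt (radicand p a c s))"
    unfolding J_def by (rule integral_spike[of "{1}"]) auto
  also have "\<dots> \<le> integral {0..1} (\<lambda>s. 1 / sqrt (1 - s) / ?K)"
  proof (rule integral_le)
    show "(\<lambda>s. if s = 1 then 0 else 1 / sqrt (radicand p a c s)) integrable_on {0..1}"
      using integrable_inverse_sqrt_radicand[OF assms]
      by (rule integrable_spike[where S = "{1}"]) auto
    show "(\<lambda>s. 1 / sqrt (1 - s) / ?K) integrable_on {0..1}"
      by (intro integrable_on_divide integrable_inverse_sqrt_one_minus)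
    show "(if s = 1 then 0 else 1 / sqrt (radicand p a c s)) \<le> 1 / sqrt (1 - s) / ?K"
      if "s \<in> {0..1}" for s
      using that assms inverse_sqrt_radicand_le[of p a c s] by auto
  qed
  also have "\<dots> = integral {0..1} (\<lambda>s. 1 / sqrt (1 - s)) / ?K"
    by (rule integral_divide)
  also have "\<dots> = 2 / ?K"
    using has_integral_inverse_sqrt_one_minus by (simp add: integral_unique)
  finally show ?thesis .
qed

lemma J_c_zero: "J p a 0 = 1"
  by (simp add: J_def radicand_def)

lemma J_a_zero:
  assumes "0 < c" "c \<le> 1"
  shows "J p 0 c = arcsin c / c"
proof -
  have "((\<lambda>s. 1 / sqrt (radicand p 0 c s)) has_integral (arcsin (c * 1) / c - arcsin (c * 0) / c)) {0..1}"
  proof (rule fundamental_theorem_of_calculus_interior)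
    have "\<forall>s\<in>{0..1}. - 1 \<le> c * s \<and> c * s \<le> 1"
      using assms by (auto intro: mult_le_one order_trans[of _ 0])
    then show "continuous_on {0..1} (\<lambda>s. arcsin (c * s) / c)"
      using assms by (intro continuous_intros) auto
    show "((\<lambda>s. arcsin (c * s) / c) has_vector_derivative 1 / sqrt (radicand p 0 c s)) (at s)"
      if "s \<in> {0<..<1}" for s
    proof -
      have s: "0 < s" "s < 1"
        using that by auto
      have "c * s \<le> s" "0 \<le> c * s"
        using s assms by (simp_all add: mult_left_le_one_le)
      have "c * s < 1"
        using \<open>c * s \<le> s\<close> s by linarith
      moreover have "- 1 < c * s"
        using \<open>0 \<le> c * s\<close> by linarith
      ultimately show ?thesis
        unfolding has_real_derivative_iff_has_vector_derivative[symmetric]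
        using assms by (auto intro!: derivative_eq_intros simp: radicand_def power_mult_distrib field_simps)
    qed
  qed simp
  then show ?thesis
    unfolding J_def by (simp add: integral_unique)
qed

section \<open>Differentiation of J under the integral sign\<close>

lemma has_real_derivative_radicand_a:
  "((\<lambda>a. radicand p a c s) has_real_derivative c powr (p + 1) * (1 - s powr (p + 1))) (at a within U)"
  unfolding radicand_def by (auto intro!: derivative_eq_intros)

lemma has_real_derivative_radicand_c:
  assumes "0 < c"
  shows "((\<lambda>c. radicand p a c s) has_real_derivative
      a * (p + 1) * c powr p * (1 - s powr (p + 1)) - 2 * c * s\<^sup>2) (at c within U)"
proof -
  have "((\<lambda>c. c powr (p + 1)) has_real_derivative (p + 1) * c powr p) (at c within U)"
    using has_real_derivative_powr[of c "p + 1"] assms by (simp add: has_field_derivative_at_within)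
  then show ?thesis
    unfolding radicand_def using assms
    by (auto intro!: derivative_eq_intros simp: algebra_simps power2_eq_square)
qed

definition J_integrand_da :: "real \<Rightarrow> real \<Rightarrow> real \<Rightarrow> real \<Rightarrow> real" where
  "J_integrand_da p a c s = - (c powr (p + 1) * (1 - s powr (p + 1)))
     / (2 * (radicand p a c s * sqrt (radicand p a c s)))"

definition J_integrand_dc :: "real \<Rightarrow> real \<Rightarrow> real \<Rightarrow> real \<Rightarrow> real" where
  "J_integrand_dc p a c s = - (a * (p + 1) * c powr p * (1 - s powr (p + 1)) - 2 * c * s\<^sup>2)
     / (2 * (radicand p a c s * sqrt (radicand p a c s)))"

definition J_da :: "real \<Rightarrow> real \<Rightarrow> real \<Rightarrow> real" where
  "J_da p a c = integral {0..1} (J_integrand_da p a c)"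

definition J_dc :: "real \<Rightarrow> real \<Rightarrow> real \<Rightarrow> real" where
  "J_dc p a c = integral {0..1} (J_integrand_dc p a c)"

lemma radicand_mult_sqrt_nonzero:
  assumes "0 \<le> p" "0 \<le> a" "0 \<le> c" "c < 1" "0 \<le> s" "s \<le> 1"
  shows "2 * (radicand p a c s * sqrt (radicand p a c s)) \<noteq> 0"
  using radicand_pos[of p a c s] assms by auto

lemma continuous_on_J_integrand_da [continuous_intros]:
  assumes "0 \<le> p" "continuous_on S fa" "continuous_on S fc" "continuous_on S fs"
    and "\<And>x. x \<in> S \<Longrightarrow> 0 \<le> fa x \<and> 0 \<le> fc x \<and> fc x < 1 \<and> 0 \<le> fs x \<and> fs x \<le> 1"
  shows "continuous_on S (\<lambda>x. J_integrand_da p (fa x) (fc x) (fs x))"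
  unfolding J_integrand_da_def using assms radicand_mult_sqrt_nonzero
  by (intro continuous_intros continuous_on_powr') auto

lemma continuous_on_J_integrand_dc [continuous_intros]:
  assumes "0 < p" "continuous_on S fa" "continuous_on S fc" "continuous_on S fs"
    and "\<And>x. x \<in> S \<Longrightarrow> 0 \<le> fa x \<and> 0 \<le> fc x \<and> fc x < 1 \<and> 0 \<le> fs x \<and> fs x \<le> 1"
  shows "continuous_on S (\<lambda>x. J_integrand_dc p (fa x) (fc x) (fs x))"
  unfolding J_integrand_dc_def using assms radicand_mult_sqrt_nonzero
  by (intro continuous_intros continuous_on_powr') auto

lemma continuous_on_J_derivatives [continuous_intros]:
  assumes "0 < p" "continuous_on S f" "continuous_on S g"
    and "\<And>x. x \<in> S \<Longrightarrow> 0 \<le> f x \<and> 0 \<le> g x \<and> g x < 1"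
  shows "continuous_on S (\<lambda>x. J_da p (f x) (g x))"
    and "continuous_on S (\<lambda>x. J_dc p (f x) (g x))"
proof -
  have f: "continuous_on (S \<times> {0..1}) (\<lambda>z. f (fst z))"
    and g: "continuous_on (S \<times> {0..1}) (\<lambda>z. g (fst z))"
    by (auto intro!: continuous_on_compose2[OF assms(2)] continuous_on_compose2[OF assms(3)]
        continuous_intros)
  have "continuous_on (S \<times> cbox 0 1) (\<lambda>(x, s). J_integrand_da p (f x) (g x) s)"
    and "continuous_on (S \<times> cbox 0 1) (\<lambda>(x, s). J_integrand_dc p (f x) (g x) s)"
    unfolding case_prod_beta' using assms f g by (auto intro!: continuous_intros)
  from this[THEN integral_continuous_on_param]
  show "continuous_on S (\<lambda>x. J_da p (f x) (g x))" and "continuous_on S (\<lambda>x. J_dc p (f x) (g x))"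
    by (simp_all add: J_da_def J_dc_def)
qed

lemma has_real_derivative_J_a:
  assumes "0 \<le> p" "0 < a" "0 \<le> c" "c < 1"
  shows "((\<lambda>a. J p a c) has_real_derivative J_da p a c) (at a)"
proof -
  have "((\<lambda>a. integral (cbox 0 1) (\<lambda>s. 1 / sqrt (radicand p a c s))) has_field_derivative
      integral (cbox 0 1) (J_integrand_da p a c)) (at a within {0<..})"
  proof (rule leibniz_rule_field_derivative[where fx = "\<lambda>a. J_integrand_da p a c"])
    show "((\<lambda>a. 1 / sqrt (radicand p a c s)) has_field_derivative J_integrand_da p x c s)
        (at x within {0<..})" if "x \<in> {0<..}" "s \<in> cbox 0 1" for x s
      unfolding J_integrand_da_def using assms that
      by (intro has_real_derivative_inverse_sqrt has_real_derivative_radicand_a radicand_pos) auto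
    show "(\<lambda>s. 1 / sqrt (radicand p x c s)) integrable_on cbox 0 1" if "x \<in> {0<..}" for x
      using assms that by (auto intro: integrable_inverse_sqrt_radicand)
    show "continuous_on ({0<..} \<times> cbox 0 1) (\<lambda>(x, s). J_integrand_da p x c s)"
      unfolding case_prod_beta' using assms by (auto intro!: continuous_intros)
  qed (use assms in auto)
  then show ?thesis
    using at_within_open[of a "{0<..}"] assms by (simp add: J_def J_da_def)
qed

lemma has_real_derivative_J_c:
  assumes "0 < p" "0 \<le> a" "0 < c" "c < 1"
  shows "((\<lambda>c. J p a c) has_real_derivative J_dc p a c) (at c)"
proof -
  have "((\<lambda>c. integral (cbox 0 1) (\<lambda>s. 1 / sqrt (radicand p a c s))) has_field_derivative
      integral (cbox 0 1) (J_integrand_dc p a c)) (at c within {0<..<1})"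
  proof (rule leibniz_rule_field_derivative[where fx = "\<lambda>c. J_integrand_dc p a c"])
    show "((\<lambda>c. 1 / sqrt (radicand p a c s)) has_field_derivative J_integrand_dc p a x s)
        (at x within {0<..<1})" if "x \<in> {0<..<1}" "s \<in> cbox 0 1" for x s
      unfolding J_integrand_dc_def using assms that
      by (intro has_real_derivative_inverse_sqrt has_real_derivative_radicand_c radicand_pos) auto
    show "(\<lambda>s. 1 / sqrt (radicand p a x s)) integrable_on cbox 0 1" if "x \<in> {0<..<1}" for x
      using assms that by (auto intro: integrable_inverse_sqrt_radicand)
    show "continuous_on ({0<..<1} \<times> cbox 0 1) (\<lambda>(x, s). J_integrand_dc p a x s)"
      unfolding case_prod_beta' using assms by (auto intro!: continuous_intros)
  qed (use assms in auto)
  then show ?thesis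
    using at_within_open[of c "{0<..<1}"] assms by (simp add: J_def J_dc_def)
qed

section \<open>Reduction of phi to J\<close>

definition phi_coeff :: "real \<Rightarrow> real \<Rightarrow> real \<Rightarrow> real" where
  "phi_coeff p lam R = 2 * R powr (p - 1) / (lam * (p + 1))"

lemma phi_eq_J:
  assumes "0 < cos \<theta>"
  shows "phi p lam R \<theta> = 2 * cos \<theta> * J p (phi_coeff p lam R) (cos \<theta>)"
proof -
  define c where "c = cos \<theta>"
  define a where "a = phi_coeff p lam R"
  have c: "0 < c"
    using assms by (simp add: c_def)
  have "c powr (p + 1) = c powr (p - 1 + 2)"
    by (simp add: ac_simps)
  also have "\<dots> = c powr (p - 1) * c powr 2"
    by (rule powr_add)
  also have "c powr 2 = c\<^sup>2"
    using c by (simp add: powr_realpow)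
  finally have "radicand p a c s = c\<^sup>2 * (1 / c\<^sup>2 - s\<^sup>2 + a * c powr (p - 1) * (1 - s powr (p + 1)))"
    for s
    using c by (simp add: radicand_def field_simps)
  then have "1 / sqrt (1 / c\<^sup>2 - s\<^sup>2 + a * c powr (p - 1) * (1 - s powr (p + 1)))
      = c * (1 / sqrt (radicand p a c s))" for s
    using c by (simp add: real_sqrt_mult)
  moreover have "2 * R powr (p - 1) * c powr (p - 1) / (lam * (p + 1)) = a * c powr (p - 1)"
    by (simp add: a_def phi_coeff_def)
  moreover have "integral {0..1} (\<lambda>s. c / sqrt (radicand p a c s))
      = c * integral {0..1} (\<lambda>s. 1 / sqrt (radicand p a c s))"
    using integral_mult_right[of "{0..1}" c "\<lambda>s. 1 / sqrt (radicand p a c s)"] by simp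
  ultimately show ?thesis
    by (simp add: phi_def J_def flip: c_def a_def)
qed

lemma phi_ext_eq_J:
  assumes "\<theta> \<in> {0..pi/2}"
  shows "phi_ext p lam R \<theta> = 2 * cos \<theta> * J p (phi_coeff p lam R) (cos \<theta>)"
proof (cases "\<theta> = pi/2")
  case False
  then show ?thesis
    using assms phi_eq_J[OF cos_gt_zero_0_pi_half] by (simp add: phi_ext_def)
next
  case True
  then show ?thesis
    unfolding phi_ext_def True by simp
qed

lemma phi_coeff_pos:
  assumes "0 \<le> p" "0 < lam" "0 < R"
  shows "0 < phi_coeff p lam R"
  using assms by (simp add: phi_coeff_def)

lemma phi_coeff_strict_mono:
  assumes "1 < p" "0 < lam" "0 < R1" "R1 < R2"
  shows "phi_coeff p lam R1 < phi_coeff p lam R2"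
  using assms powr_less_mono2[of "p - 1" R1 R2] by (simp add: phi_coeff_def divide_strict_right_mono)

lemma phi_coeff_tendsto_0:
  assumes "1 < p"
  shows "(phi_coeff p lam \<longlongrightarrow> 0) (at_right 0)"
proof -
  have "((\<lambda>R. R powr (p - 1)) \<longlongrightarrow> 0) (at_right 0)"
    using assms by (intro tendsto_zero_powrI tendsto_ident_at tendsto_const eventually_at_rightI[of 0 1]) auto
  then show ?thesis
    unfolding phi_coeff_def[abs_def] by (intro tendsto_divide_zero tendsto_mult_right_zero)
qed

lemma has_real_derivative_phi_coeff:
  assumes "0 < R"
  shows "(phi_coeff p lam has_real_derivative (p - 1) * phi_coeff p lam R / R) (at R)"
proof -
  have "((\<lambda>R. R powr (p - 1)) has_real_derivative (p - 1) * R powr (p - 1 - 1)) (at R)"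
    by (rule has_real_derivative_powr[OF assms])
  then have "(phi_coeff p lam has_real_derivative 2 * ((p - 1) * R powr (p - 1 - 1)) / (lam * (p + 1)))
      (at R)"
    unfolding phi_coeff_def[abs_def] by (intro DERIV_cdivide DERIV_cmult)
  moreover have "R powr (p - 1 - 1) = R powr (p - 1) / R"
    using assms by (subst powr_diff) simp
  then have "2 * ((p - 1) * R powr (p - 1 - 1)) / (lam * (p + 1)) = (p - 1) * phi_coeff p lam R / R"
    by (simp add: phi_coeff_def divide_inverse mult_ac)
  ultimately show ?thesis
    by simp
qed

lemma continuous_on_phi_coeff [continuous_intros]:
  assumes "continuous_on S f" "\<And>x. x \<in> S \<Longrightarrow> 0 < f x"
  shows "continuous_on S (\<lambda>x. phi_coeff p lam (f x))"
proof -
  have "f x \<noteq> 0" if "x \<in> S" for x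
    using assms(2)[OF that] by simp
  then show ?thesis
    unfolding phi_coeff_def divide_inverse using assms(1) by (intro continuous_intros) auto
qed

lemma cos_mult_J_zero:
  assumes "\<theta> \<in> {0..<pi/2}"
  shows "2 * cos \<theta> * J p 0 (cos \<theta>) = pi - 2 * \<theta>"
proof -
  have "arcsin (cos \<theta>) = pi/2 - \<theta>"
    using assms by (simp add: arcsin_arccos_eq arccos_cos)
  then show ?thesis
    using cos_gt_zero_0_pi_half[OF assms] by (simp add: J_a_zero)
qed

lemma phi_pos:
  assumes "0 \<le> p" "0 < lam" "0 < R" "\<theta> \<in> {0..<pi/2}"
  shows "0 < phi p lam R \<theta>"
  using assms phi_coeff_pos[of p lam R] cos_gt_zero_0_pi_half[of \<theta>]
  by (simp add: phi_eq_J J_pos less_imp_le)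

lemma phi_strict_antimono:
  assumes "1 < p" "0 < lam" "\<theta> \<in> {0..<pi/2}" "0 < R1" "R1 < R2"
  shows "phi p lam R2 \<theta> < phi p lam R1 \<theta>"
proof -
  have "J p (phi_coeff p lam R2) (cos \<theta>) < J p (phi_coeff p lam R1) (cos \<theta>)"
    using assms phi_coeff_pos[of p lam R1] phi_coeff_strict_mono[of p lam R1 R2] cos_gt_zero_0_pi_half[of \<theta>]
    by (intro J_strict_antimono) auto
  then show ?thesis
    using cos_gt_zero_0_pi_half[OF assms(3)] by (simp add: phi_eq_J)
qed

lemma phi_less_pi_minus_2theta:
  assumes "0 \<le> p" "0 < lam" "0 < R" "\<theta> \<in> {0..<pi/2}"
  shows "phi p lam R \<theta> < pi - 2 * \<theta>"
proof -
  have "J p (phi_coeff p lam R) (cos \<theta>) < J p 0 (cos \<theta>)"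
    using assms phi_coeff_pos[of p lam R] cos_gt_zero_0_pi_half[of \<theta>] by (intro J_strict_antimono) auto
  then have "2 * cos \<theta> * J p (phi_coeff p lam R) (cos \<theta>) < 2 * cos \<theta> * J p 0 (cos \<theta>)"
    using cos_gt_zero_0_pi_half[OF assms(4)] by simp
  then show ?thesis
    using cos_gt_zero_0_pi_half[OF assms(4)] cos_mult_J_zero[OF assms(4), of p] by (simp add: phi_eq_J)
qed

lemma phi_tendsto_at_top:
  assumes "1 < p" "0 < lam" "\<theta> \<in> {0..<pi/2}"
  shows "((\<lambda>R. phi p lam R \<theta>) \<longlongrightarrow> 0) at_top"
proof (rule tendsto_sandwich)
  define c where "c = cos \<theta>"
  have c: "0 < c" "c \<le> 1"
    using cos_gt_zero_0_pi_half[OF assms(3)] by (auto simp: c_def)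
  let ?bound = "\<lambda>R. 2 * c * (2 / sqrt (1 + phi_coeff p lam R * c powr (p + 1)))"
  show "\<forall>\<^sub>F R in at_top. 0 \<le> phi p lam R \<theta>"
    using eventually_gt_at_top[of 0]
  proof eventually_elim
    case (elim R)
    show ?case
      using phi_pos[of p lam R \<theta>] assms elim by simp
  qed
  show "\<forall>\<^sub>F R in at_top. phi p lam R \<theta> \<le> ?bound R"
    using eventually_gt_at_top[of 0]
  proof eventually_elim
    case (elim R)
    have "J p (phi_coeff p lam R) c \<le> 2 / sqrt (1 + phi_coeff p lam R * c powr (p + 1))"
      using assms elim c phi_coeff_pos[of p lam R] by (intro J_le) auto
    then have "2 * c * J p (phi_coeff p lam R) c \<le> ?bound R"
      using c by (intro mult_left_mono) auto
    then show ?case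
      using c by (simp add: phi_eq_J flip: c_def)
  qed
  define k where "k = 2 * c powr (p + 1) / (lam * (p + 1))"
  have "0 < k"
    using assms c by (simp add: k_def)
  then have "filterlim (\<lambda>R. sqrt (1 + k * R powr (p - 1))) at_top at_top"
    using assms by (intro filterlim_compose[OF sqrt_at_top] filterlim_tendsto_add_at_top[OF tendsto_const]
        filterlim_tendsto_pos_mult_at_top[OF tendsto_const] filterlim_powr_at_top) auto
  then have "((\<lambda>R. 2 * c * (2 / sqrt (1 + k * R powr (p - 1)))) \<longlongrightarrow> 0) at_top"
    by (intro tendsto_mult_right_zero tendsto_divide_0[OF tendsto_const] filterlim_at_top_imp_at_infinity)
  moreover have "phi_coeff p lam R * c powr (p + 1) = k * R powr (p - 1)" for R
    by (simp add: phi_coeff_def k_def)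
  ultimately show "(?bound \<longlongrightarrow> 0) at_top"
    by simp
qed simp

lemma phi_tendsto_at_right_0:
  assumes "1 < p" "0 < lam" "\<theta> \<in> {0..<pi/2}"
  shows "((\<lambda>R. phi p lam R \<theta>) \<longlongrightarrow> pi - 2 * \<theta>) (at_right 0)"
proof -
  define c where "c = cos \<theta>"
  have c: "0 < c" "c \<le> 1"
    using cos_gt_zero_0_pi_half[OF assms(3)] by (auto simp: c_def)
  have "continuous_on {0..} (\<lambda>a. J p a c)"
    using assms c by (intro continuous_intros) auto
  moreover have "\<forall>\<^sub>F R in at_right 0. phi_coeff p lam R \<in> {0..}"
    using eventually_at_right_less[of 0]
  proof eventually_elim
    case (elim R)
    show ?case
      using phi_coeff_pos[of p lam R] assms elim by simp
  qed
  ultimately have "((\<lambda>R. J p (phi_coeff p lam R) c) \<longlongrightarrow> J p 0 c) (at_right 0)"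
    using continuous_on_tendsto_compose phi_coeff_tendsto_0[OF assms(1)] by fastforce
  then have "((\<lambda>R. 2 * c * J p (phi_coeff p lam R) c) \<longlongrightarrow> pi - 2 * \<theta>) (at_right 0)"
    using cos_mult_J_zero[OF assms(3), of p] by (auto intro: tendsto_eq_intros simp flip: c_def)
  then show ?thesis
    using c by (simp add: phi_eq_J flip: c_def)
qed

lemma phi_ext_continuous:
  assumes "0 \<le> p" "0 < lam"
  shows "continuous_on ({0<..} \<times> {0..pi/2}) (\<lambda>z. phi_ext p lam (fst z) (snd z))"
proof (rule continuous_on_eq)
  show "continuous_on ({0<..} \<times> {0..pi/2})
      (\<lambda>z. 2 * cos (snd z) * J p (phi_coeff p lam (fst z)) (cos (snd z)))"
    using assms phi_coeff_pos[of p lam] cos_ge_zero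
    by (intro continuous_intros) (auto simp: less_imp_le)
qed (simp add: phi_ext_eq_J mem_Times_iff)

lemma phi_continuous:
  assumes "0 \<le> p" "0 < lam"
  shows "continuous_on ({0<..} \<times> {0..<pi/2}) (\<lambda>z. phi p lam (fst z) (snd z))"
proof (rule continuous_on_eq)
  show "continuous_on ({0<..} \<times> {0..<pi/2}) (\<lambda>z. phi_ext p lam (fst z) (snd z))"
    by (rule continuous_on_subset[OF phi_ext_continuous[OF assms]]) auto
qed (auto simp: phi_ext_def)

section \<open>Partial derivatives of phi\<close>

definition phi_dR :: "real \<Rightarrow> real \<Rightarrow> real \<Rightarrow> real \<Rightarrow> real" where
  "phi_dR p lam R \<theta> =
     2 * cos \<theta> * J_da p (phi_coeff p lam R) (cos \<theta>) * ((p - 1) * phi_coeff p lam R / R)"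

definition phi_dtheta :: "real \<Rightarrow> real \<Rightarrow> real \<Rightarrow> real \<Rightarrow> real" where
  "phi_dtheta p lam R \<theta> = - 2 * sin \<theta> *
     (J p (phi_coeff p lam R) (cos \<theta>) + cos \<theta> * J_dc p (phi_coeff p lam R) (cos \<theta>))"

lemma has_real_derivative_cos_mult_J:
  assumes "0 < p" "0 \<le> a" "\<theta> \<in> {0<..<pi/2}"
  shows "((\<lambda>t. 2 * cos t * J p a (cos t)) has_real_derivative
      - 2 * sin \<theta> * (J p a (cos \<theta>) + cos \<theta> * J_dc p a (cos \<theta>))) (at \<theta>)"
proof -
  have "0 < cos \<theta>" "cos \<theta> < 1"
    using assms cos_gt_zero_0_pi_half[of \<theta>] cos_ge_zero_less_one_0_pi_half[of \<theta>] by auto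
  then have "((\<lambda>t. J p a (cos t)) has_real_derivative J_dc p a (cos \<theta>) * - sin \<theta>) (at \<theta>)"
    using assms by (intro DERIV_chain2[OF has_real_derivative_J_c DERIV_cos]) auto
  then show ?thesis
    by (auto intro!: derivative_eq_intros simp: algebra_simps)
qed

lemma has_real_derivative_cos_mult_J_at_pi_half:
  assumes "0 \<le> p" "0 \<le> a"
  shows "((\<lambda>t. 2 * cos t * J p a (cos t)) has_real_derivative -2) (at (pi/2) within {0..pi/2})"
proof -
  have "continuous_on {0..pi/2} (\<lambda>t. J p a (cos t))"
    using assms cos_ge_zero by (intro continuous_intros) auto
  then have "continuous (at (pi/2) within {0..pi/2}) (\<lambda>t. J p a (cos t))"
    by (simp add: continuous_on_eq_continuous_within)
  moreover have "((\<lambda>t. 2 * cos t) has_real_derivative - 2) (at (pi/2) within {0..pi/2})"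
    by (auto intro!: derivative_eq_intros)
  ultimately have "((\<lambda>t. 2 * cos t * J p a (cos t)) has_real_derivative - 2 * J p a (cos (pi/2)))
      (at (pi/2) within {0..pi/2})"
    by (intro DERIV_mult_vanishing) auto
  then show ?thesis
    by (simp add: J_c_zero)
qed

lemma has_real_derivative_phi_R:
  assumes "1 < p" "0 < lam" "0 < R" "\<theta> \<in> {0<..<pi/2}"
  shows "((\<lambda>R. phi p lam R \<theta>) has_real_derivative phi_dR p lam R \<theta>) (at R)"
proof -
  have c: "0 < cos \<theta>" "cos \<theta> < 1"
    using assms cos_gt_zero_0_pi_half[of \<theta>] cos_ge_zero_less_one_0_pi_half[of \<theta>] by auto
  have "((\<lambda>R. J p (phi_coeff p lam R) (cos \<theta>)) has_real_derivative
      J_da p (phi_coeff p lam R) (cos \<theta>) * ((p - 1) * phi_coeff p lam R / R)) (at R)"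
    using assms c phi_coeff_pos[of p lam R]
    by (intro DERIV_chain2[OF has_real_derivative_J_a has_real_derivative_phi_coeff]) auto
  then show ?thesis
    using c unfolding phi_dR_def by (auto intro!: derivative_eq_intros simp: phi_eq_J)
qed

lemma has_real_derivative_phi_theta:
  assumes "1 < p" "0 < lam" "0 < R" "\<theta> \<in> {0<..<pi/2}"
  shows "((\<lambda>t. phi p lam R t) has_real_derivative phi_dtheta p lam R \<theta>) (at \<theta>)"
proof (rule has_field_derivative_transform_within_open)
  show "((\<lambda>t. 2 * cos t * J p (phi_coeff p lam R) (cos t)) has_real_derivative phi_dtheta p lam R \<theta>)
      (at \<theta>)"
    unfolding phi_dtheta_def using assms phi_coeff_pos[of p lam R]
    by (intro has_real_derivative_cos_mult_J) auto
  show "2 * cos t * J p (phi_coeff p lam R) (cos t) = phi p lam R t" if "t \<in> {0<..<pi/2}" for t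
    using that cos_gt_zero_0_pi_half[of t] by (simp add: phi_eq_J)
qed (use assms in auto)

lemma phi_dtheta_pi_half: "phi_dtheta p lam R (pi/2) = -2"
  by (simp add: phi_dtheta_def J_c_zero)

lemma has_real_derivative_phi_ext_theta:
  assumes "1 < p" "0 < lam" "0 < R" "\<theta> \<in> {0<..pi/2}"
  shows "((\<lambda>t. phi_ext p lam R t) has_real_derivative phi_dtheta p lam R \<theta>) (at \<theta> within {0..pi/2})"
proof (rule has_field_derivative_transform_within[OF _ zero_less_one])
  show "((\<lambda>t. 2 * cos t * J p (phi_coeff p lam R) (cos t)) has_real_derivative phi_dtheta p lam R \<theta>)
      (at \<theta> within {0..pi/2})"
  proof (cases "\<theta> = pi/2")
    case True
    have "((\<lambda>t. 2 * cos t * J p (phi_coeff p lam R) (cos t)) has_real_derivative -2)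
        (at (pi/2) within {0..pi/2})"
      using assms phi_coeff_pos[of p lam R] by (intro has_real_derivative_cos_mult_J_at_pi_half) auto
    then show ?thesis
      unfolding True phi_dtheta_pi_half .
  next
    case False
    then show ?thesis
      unfolding phi_dtheta_def using assms phi_coeff_pos[of p lam R]
      by (intro has_real_derivative_cos_mult_J[THEN has_field_derivative_at_within]) auto
  qed
  show "2 * cos t * J p (phi_coeff p lam R) (cos t) = phi_ext p lam R t" if "t \<in> {0..pi/2}" for t
    using that by (simp add: phi_ext_eq_J)
qed (use assms in auto)

lemma continuous_on_phi_dR:
  assumes "1 < p" "0 < lam"
  shows "continuous_on ({0<..} \<times> {0<..<pi/2}) (\<lambda>z. phi_dR p lam (fst z) (snd z))"
  unfolding phi_dR_def using assms phi_coeff_pos[of p lam] cos_ge_zero_less_one_0_pi_half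
  by (intro continuous_intros) (auto simp: less_imp_le)

lemma continuous_on_phi_dtheta:
  assumes "1 < p" "0 < lam"
  shows "continuous_on ({0<..} \<times> {0<..pi/2}) (\<lambda>z. phi_dtheta p lam (fst z) (snd z))"
  unfolding phi_dtheta_def using assms phi_coeff_pos[of p lam] cos_ge_zero_less_one_0_pi_half
  by (intro continuous_intros) (auto simp: less_imp_le)

lemma phi_has_derivative:
  assumes "1 < p" "0 < lam" "z \<in> {0<..} \<times> {0<..<pi/2}"
  shows "((\<lambda>w. phi p lam (fst w) (snd w)) has_derivative
      (\<lambda>h. phi_dR p lam (fst z) (snd z) * fst h + phi_dtheta p lam (fst z) (snd z) * snd h)) (at z)"
proof -
  obtain R \<theta> where z: "z = (R, \<theta>)" "0 < R" "\<theta> \<in> {0<..<pi/2}"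
    using assms(3) by auto
  have "((\<lambda>w. phi p lam (fst w) (snd w)) has_derivative
      (\<lambda>h. phi_dR p lam R \<theta> * fst h + phi_dtheta p lam R \<theta> * snd h)) (at (R, \<theta>))"
  proof (rule has_derivative_real_partialsI[where X = "{0<..}" and Y = "{0<..<pi/2}"])
    show "continuous_on ({0<..} \<times> {0<..<pi/2}) (\<lambda>z. phi_dtheta p lam (fst z) (snd z))"
      by (rule continuous_on_subset[OF continuous_on_phi_dtheta[OF assms(1,2)]]) auto
  qed (use assms z in \<open>auto intro: has_real_derivative_phi_R has_real_derivative_phi_theta\<close>)
  then show ?thesis
    using z by simp
qed

lemma phi_continuously_differentiable:
  assumes "1 < p" "0 < lam"
  shows "\<exists>DR DT. continuous_on ({0<..} \<times> {0<..<pi/2}) DR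
    \<and> continuous_on ({0<..} \<times> {0<..<pi/2}) DT
    \<and> (\<forall>z\<in>{0<..} \<times> {0<..<pi/2}.
         ((\<lambda>w. phi p lam (fst w) (snd w)) has_derivative (\<lambda>h. DR z * fst h + DT z * snd h)) (at z))"
proof (rule exI[of _ "\<lambda>z. phi_dR p lam (fst z) (snd z)"],
    rule exI[of _ "\<lambda>z. phi_dtheta p lam (fst z) (snd z)"], intro conjI ballI)
  show "continuous_on ({0<..} \<times> {0<..<pi/2}) (\<lambda>z. phi_dtheta p lam (fst z) (snd z))"
    by (rule continuous_on_subset[OF continuous_on_phi_dtheta[OF assms]]) auto
qed (use assms in \<open>auto intro: continuous_on_phi_dR phi_has_derivative\<close>)

lemma phi_ext_continuously_differentiable_theta:
  assumes "1 < p" "0 < lam"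
  shows "\<exists>D. continuous_on ({0<..} \<times> {0<..pi/2}) D
    \<and> (\<forall>R>0. \<forall>\<theta>\<in>{0<..pi/2}.
         ((\<lambda>t. phi_ext p lam R t) has_real_derivative D (R, \<theta>)) (at \<theta> within {0..pi/2}))
    \<and> (\<forall>R>0. D (R, pi/2) = -2)"
  using continuous_on_phi_dtheta[OF assms] has_real_derivative_phi_ext_theta[OF assms]
  by (intro exI[of _ "\<lambda>z. phi_dtheta p lam (fst z) (snd z)"]) (simp add: phi_dtheta_pi_half)

theorem lemma5p1:
  fixes p lam :: real
  assumes "p > 1" and "lam > 0"
  shows
    "continuous_on ({0<..} \<times> {0..<pi/2}) (\<lambda>z. phi p lam (fst z) (snd z))
   \<and> (\<forall>R>0. \<forall>\<theta>\<in>{0..<pi/2}. phi p lam R \<theta> > 0)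
   \<and> (\<exists>DR DT. continuous_on ({0<..} \<times> {0<..<pi/2}) DR
        \<and> continuous_on ({0<..} \<times> {0<..<pi/2}) DT
        \<and> (\<forall>z\<in>{0<..} \<times> {0<..<pi/2}.
             ((\<lambda>w. phi p lam (fst w) (snd w)) has_derivative
                (\<lambda>h. DR z * fst h + DT z * snd h)) (at z)))
   \<and> (\<forall>\<theta>\<in>{0..<pi/2}.
          (\<forall>R1 R2. 0 < R1 \<longrightarrow> R1 < R2 \<longrightarrow> phi p lam R2 \<theta> < phi p lam R1 \<theta>)
        \<and> ((\<lambda>R. phi p lam R \<theta>) \<longlongrightarrow> 0) at_top
        \<and> ((\<lambda>R. phi p lam R \<theta>) \<longlongrightarrow> pi - 2 * \<theta>) (at_right 0)
        \<and> (\<forall>R>0. phi p lam R \<theta> < pi - 2 * \<theta>))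
   \<and> continuous_on ({0<..} \<times> {0..pi/2}) (\<lambda>z. phi_ext p lam (fst z) (snd z))
   \<and> (\<exists>D. continuous_on ({0<..} \<times> {0<..pi/2}) D
        \<and> (\<forall>R>0. \<forall>\<theta>\<in>{0<..pi/2}.
             ((\<lambda>t. phi_ext p lam R t) has_real_derivative D (R, \<theta>)) (at \<theta> within {0..pi/2}))
        \<and> (\<forall>R>0. D (R, pi/2) = -2))"
proof -
  have "0 \<le> p"
    using assms(1) by simp
  then show ?thesis
    using assms phi_continuous phi_pos phi_continuously_differentiable phi_strict_antimono
      phi_tendsto_at_top phi_tendsto_at_right_0 phi_less_pi_minus_2theta phi_ext_continuous
      phi_ext_continuously_differentiable_theta
    by simp
qed

end
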